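(* Let $f$ be a real function infinitely differentiable on a neighborhood of $0$, and write $c_i^f=f^{(i)}(0)$. Let $q$ be a positive integer and $w\in\mathbb{R}$. For $n\in\mathbb{N}_0$ put $u_n=\lfloor n/q\rfloor$ and $v_n=n \bmod q$, and define \[ a_n=\sum_{i=0}^{n}m_{n,i}\,c_i^f,\qquad m_{n,i}=\delta_{v_{n-i},0}\,\frac{(-1)^{u_{n-i}}\,w^{\llbracket u_{n-i}\rrbracket}}{(v_n+q\,u_i)!\;u_{n-i}!}. \] Then the function $\mathcal{A}^{f,D_1}(x)=\exp(wx^q)\sum_{n=0}^{\infty}a_nx^n$ matches all derivatives of $f$ at $0$; precisely, for every $N\in\mathbb{N}_0$, the function $x\mapsto\exp(wx^q)\sum_{n=0}^{N}a_nx^n$ satisfies \[ \frac{d^m}{dx^m}\Big[\exp(wx^q)\sum_{n=0}^{N}a_nx^n\Big]_{x=0}=f^{(m)}(0)\qquad\text{for all }0\le m\le N . \]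
   Context: $\delta_{j,0}$ is the Kronecker delta, $\lfloor\cdot\rfloor$ the floor function, and $n\bmod q$ the remainder of $n$ upon division by $q$. The generalized exponentiation is defined by $x^{\llbracket y\rrbracket}=1$ if $x=y=0$, and $x^{\llbracket y\rrbracket}=x^y$ otherwise (so in particular $0^{\llbracket 0\rrbracket}=1$, allowing $w=0$). *)

theory Defs
  imports "HOL-Analysis.Analysis"
begin

text \<open>Generalized exponentiation: x^[y] = 1 if x = y = 0, else x^y.
  For a natural-number exponent this coincides with HOL's power (0 ^ 0 = 1).\<close>
definition gen_pow :: "real \<Rightarrow> nat \<Rightarrow> real" where
  "gen_pow x y = (if x = 0 \<and> y = 0 then 1 else x ^ y)"

definition m_coef :: "nat \<Rightarrow> real \<Rightarrow> nat \<Rightarrow> nat \<Rightarrow> real" where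
  "m_coef q w n i =
     (if (n - i) mod q = 0 then 1 else 0) *
     ((-1) ^ ((n - i) div q) * gen_pow w ((n - i) div q)) /
     (fact (n mod q + q * (i div q)) * fact ((n - i) div q))"

definition a_coef :: "(real \<Rightarrow> real) \<Rightarrow> nat \<Rightarrow> real \<Rightarrow> nat \<Rightarrow> real" where
  "a_coef f q w n = (\<Sum>i=0..n. m_coef q w n i * (deriv ^^ i) f 0)"

end

theory Submission
  imports Defs "HOL-Analysis.FPS_Convergence"
begin

(* The function exp (w x^q) has the power series E_w = \<Sum>k. w^k x^(q k) / k!, and
   E_w E_(-w) = 1 because exp (w x^q) exp (-w x^q) = 1. The numbers a_n are precisely the
   coefficients of E_(-w) C, where C is the Taylor series of f at 0: the Kronecker delta picks
   out the nonzero coefficients of E_(-w), and v_n + q u_i = n - i whenever q divides i.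
   So exp (w x^q) \<Sum>n\<le>N. a_n x^n has the power series E_w P, where P is E_(-w) C truncated
   after degree N, and up to degree N its coefficients agree with those of E_w E_(-w) C = C. *)

definition fps_exp_X_power :: "nat \<Rightarrow> 'a::real_normed_field \<Rightarrow> 'a fps" where
  "fps_exp_X_power q w = Abs_fps (\<lambda>n. if q dvd n then w ^ (n div q) / fact (n div q) else 0)"

lemma sums_fps_exp_X_power:
  fixes w x :: "'a::{banach, real_normed_field}"
  assumes "q > 0"
  shows "(\<lambda>n. fps_nth (fps_exp_X_power q w) n * x ^ n) sums exp (w * x ^ q)"
proof -
  have "(\<lambda>k. (w * x ^ q) ^ k /\<^sub>R fact k) sums exp (w * x ^ q)"
    by (rule exp_converges)
  also have "(\<lambda>k. (w * x ^ q) ^ k /\<^sub>R fact k)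
               = (\<lambda>k. fps_nth (fps_exp_X_power q w) (q * k) * x ^ (q * k))"
    using assms
    by (auto simp: fps_exp_X_power_def scaleR_conv_of_real field_simps
             simp flip: power_mult)
  finally show ?thesis
    using assms by (subst (asm) sums_mono_reindex) (auto simp: fps_exp_X_power_def strict_mono_def)
qed

lemma has_fps_expansion_exp_X_power:
  fixes w :: "'a::{banach, real_normed_field}"
  assumes "q > 0"
  shows "(\<lambda>x. exp (w * x ^ q)) has_fps_expansion fps_exp_X_power q w"
proof -
  have "fps_conv_radius (fps_exp_X_power q w) = \<infinity>"
    unfolding fps_conv_radius_def
    by (rule conv_radius_inftyI'') (use sums_fps_exp_X_power[OF assms] in \<open>auto simp: sums_iff\<close>)
  moreover have "eval_fps (fps_exp_X_power q w) x = exp (w * x ^ q)" for x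
    using sums_fps_exp_X_power[OF assms, of w x] by (simp add: eval_fps_def sums_iff)
  ultimately show ?thesis
    by (simp add: has_fps_expansion_def)
qed

lemma fps_nth_fps_expansion_field:
  fixes f :: "'a::{banach, real_normed_field} \<Rightarrow> 'a"
  assumes "f has_fps_expansion F"
  shows "fps_nth F n = (deriv ^^ n) f 0 / fact n"
  using assms
proof (induction n arbitrary: f F)
  case 0
  then show ?case
    by (auto simp: has_fps_expansion_def eval_fps_at_0 dest: eventually_nhds_x_imp_x)
next
  case (Suc n)
  have "(deriv ^^ Suc n) f 0 = (deriv ^^ n) (deriv f) 0"
    unfolding funpow_Suc_right o_def ..
  also have "\<dots> = fact n * fps_nth (fps_deriv F) n"
    using Suc.IH[OF has_fps_expansion_deriv[OF Suc.prems]] by simp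
  finally show ?case
    by (simp add: field_simps del: of_nat_Suc)
qed

lemma has_fps_expansion_unique:
  fixes f :: "'a::{banach, real_normed_field} \<Rightarrow> 'a"
  assumes "f has_fps_expansion F" and "f has_fps_expansion G"
  shows "F = G"
  by (rule fps_ext) (simp add: fps_nth_fps_expansion_field[OF assms(1)]
                               fps_nth_fps_expansion_field[OF assms(2)])

lemma fps_exp_X_power_mult_neg:
  fixes w :: "'a::{banach, real_normed_field}"
  assumes "q > 0"
  shows "fps_exp_X_power q w * fps_exp_X_power q (-w) = 1"
proof -
  have "(\<lambda>x. exp (w * x ^ q) * exp (-w * x ^ q)) has_fps_expansion
          fps_exp_X_power q w * fps_exp_X_power q (-w)"
    by (intro has_fps_expansion_mult has_fps_expansion_exp_X_power assms)
  moreover have "(\<lambda>x::'a. exp (w * x ^ q) * exp (-w * x ^ q)) = (\<lambda>_. 1)"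
    by (simp add: exp_add_commuting[symmetric])
  ultimately show ?thesis
    using has_fps_expansion_unique has_fps_expansion_1 by metis
qed

lemma higher_deriv_0_mult_truncated_quotient:
  fixes g :: "'a::{banach, real_normed_field} \<Rightarrow> 'a"
  assumes "g has_fps_expansion G" and "G * H = 1" and "m \<le> N"
  shows "(deriv ^^ m) (\<lambda>x. g x * (\<Sum>n=0..N. fps_nth (H * C) n * x ^ n)) 0 = fact m * fps_nth C m"
proof -
  define P where "P = (\<Sum>n=0..N. fps_const (fps_nth (H * C) n) * fps_X ^ n)"
  have expansion: "(\<lambda>x. g x * (\<Sum>n=0..N. fps_nth (H * C) n * x ^ n)) has_fps_expansion G * P"
    unfolding P_def
    by (intro has_fps_expansion_mult assms has_fps_expansion_sum
              has_fps_expansion_cmult_left has_fps_expansion_fps_X_power)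
  have "fps_nth P k = fps_nth (H * C) k" if "k \<le> N" for k
    using that by (simp add: P_def fps_sum_nth if_distrib[of "\<lambda>x. _ * x"] cong: if_cong)
  then have "fps_nth (G * P) m = fps_nth (G * (H * C)) m"
    using assms(3) by (simp add: fps_mult_nth)
  also have "\<dots> = fps_nth C m"
    by (simp add: mult.assoc[symmetric] assms(2))
  finally show ?thesis
    using fps_nth_fps_expansion_field[OF expansion, of m] by (simp add: field_simps)
qed

definition fps_taylor :: "(real \<Rightarrow> real) \<Rightarrow> real fps" where
  "fps_taylor f = Abs_fps (\<lambda>j. (deriv ^^ j) f 0 / fact j)"

lemma m_coef_diff_eq:
  assumes "i \<le> n"
  shows "m_coef q w n (n - i) * (deriv ^^ (n - i)) f 0
           = fps_nth (fps_exp_X_power q (-w)) i * fps_nth (fps_taylor f) (n - i)"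
proof (cases "q dvd i")
  case True
  then obtain t where "i = q * t" ..
  then have "n mod q = (n - i) mod q"
    using assms by (metis le_add_diff_inverse2 mod_mult_self2)
  then have "n mod q + q * ((n - i) div q) = n - i"
    by (metis add.commute div_mult_mod_eq mult.commute)
  with True assms show ?thesis
    by (simp add: m_coef_def fps_exp_X_power_def fps_taylor_def gen_pow_def power_minus_mult
                  dvd_eq_mod_eq_0 power_mult_distrib[symmetric] field_simps)
next
  case False
  with assms show ?thesis
    by (simp add: m_coef_def fps_exp_X_power_def dvd_eq_mod_eq_0)
qed

lemma a_coef_eq_fps_nth:
  "a_coef f q w n = fps_nth (fps_exp_X_power q (-w) * fps_taylor f) n"
proof -
  have "a_coef f q w n = (\<Sum>i=0..n. m_coef q w n (n - i) * (deriv ^^ (n - i)) f 0)"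
    unfolding a_coef_def by (rule sum.atLeastAtMost_rev[of _ 0 n, simplified])
  also have "\<dots> = (\<Sum>i=0..n. fps_nth (fps_exp_X_power q (-w)) i * fps_nth (fps_taylor f) (n - i))"
    by (intro sum.cong refl m_coef_diff_eq) simp
  also have "\<dots> = fps_nth (fps_exp_X_power q (-w) * fps_taylor f) n"
    by (simp add: fps_mult_nth)
  finally show ?thesis .
qed

theorem proposition3:
  fixes f :: "real \<Rightarrow> real" and q N :: nat and w :: real
  assumes smooth: "\<exists>e>0. \<forall>k. \<forall>x\<in>ball 0 e. (deriv ^^ k) f differentiable (at x)"
    and q: "q > 0"
  shows "\<forall>m\<le>N. (deriv ^^ m) (\<lambda>x. exp (w * x ^ q) * (\<Sum>n=0..N. a_coef f q w n * x ^ n)) 0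
                 = (deriv ^^ m) f 0"
proof (intro allI impI)
  \<comment> \<open>Only the values (deriv ^^ i) f 0 enter.\<close>
  fix m assume "m \<le> N"
  then have "(deriv ^^ m) (\<lambda>x. exp (w * x ^ q) *
               (\<Sum>n=0..N. fps_nth (fps_exp_X_power q (-w) * fps_taylor f) n * x ^ n)) 0
             = fact m * fps_nth (fps_taylor f) m"
    by (rule higher_deriv_0_mult_truncated_quotient
          [OF has_fps_expansion_exp_X_power[OF q] fps_exp_X_power_mult_neg[OF q]])
  then show "(deriv ^^ m) (\<lambda>x. exp (w * x ^ q) * (\<Sum>n=0..N. a_coef f q w n * x ^ n)) 0
               = (deriv ^^ m) f 0"
    by (simp add: a_coef_eq_fps_nth fps_taylor_def)
qed

end
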